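(* Let $M$ be the monoid defined by the presentation $\langle a,b,x,y \mid bxy=xyb,\ byx=yxb,\ axyb=byxa\rangle$. Then for every $\alpha\in\mathbb{N}$, the elements represented by $a(xy)^\alpha b$ and $b(yx)^\alpha a$ lie in the same connected component of the cyclic shift graph $K(M)$, and the distance between them in $K(M)$ is at least $\alpha-1$. Consequently, although $M$ is multihomogeneous, there is no bound on the diameters of the connected components of $K(M)$.
   Context: For a monoid $M$ and $s,t\in M$, write $s\sim t$ if there exist $x,y\in M$ with $s=xy$ and $t=yx$ (a cyclic shift). The cyclic shift graph $K(M)$ is the undirected graph with vertex set $M$ and an edge between $s$ and $t$ iff $s\sim t$; its connected components are the classes of the reflexive–transitive closure of $\sim$, and distances/diameters are graph distances. A presentation is multihomogeneous if each defining relation $(u,v)$ has $u$ and $v$ containing the same number of occurrences of each generator; a monoid is multihomogeneous if it admits such a presentation. *)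

theory Defs
  imports "HOL-Library.Extended_Nat"
begin

definition cyc_shift :: "'a::monoid_mult \<Rightarrow> 'a \<Rightarrow> bool" where
  "cyc_shift s t \<longleftrightarrow> (\<exists>x y. s = x * y \<and> t = y * x)"

definition K_conn :: "'a::monoid_mult \<Rightarrow> 'a \<Rightarrow> bool" where
  "K_conn s t \<longleftrightarrow> cyc_shift\<^sup>*\<^sup>* s t"

text \<open>Graph distance in K(M) (infinite if not connected).\<close>
definition K_dist :: "'a::monoid_mult \<Rightarrow> 'a \<Rightarrow> enat" where
  "K_dist s t = (INF n \<in> {n. (cyc_shift ^^ n) s t}. enat n)"

definition K_comp_diam :: "'a::monoid_mult \<Rightarrow> enat" where
  "K_comp_diam s = (SUP p \<in> {u. K_conn s u} \<times> {u. K_conn s u}. K_dist (fst p) (snd p))"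

datatype gen = A | B | X | Y

definition rels :: "(gen list \<times> gen list) set" where
  "rels = {([B,X,Y],[X,Y,B]), ([B,Y,X],[Y,X,B]), ([A,X,Y,B],[B,Y,X,A])}"

definition multihomogeneous_pres :: "('g list \<times> 'g list) set \<Rightarrow> bool" where
  "multihomogeneous_pres R \<longleftrightarrow> (\<forall>(u,v)\<in>R. \<forall>g. count_list u g = count_list v g)"

inductive pcong :: "gen list \<Rightarrow> gen list \<Rightarrow> bool" where
  rel: "(u, v) \<in> rels \<Longrightarrow> pcong (p @ u @ q) (p @ v @ q)"
| refl: "pcong u u"
| sym: "pcong u v \<Longrightarrow> pcong v u"
| trans: "pcong u v \<Longrightarrow> pcong v w \<Longrightarrow> pcong u w"

lemma pcong_equivp: "equivp pcong"
  by (intro equivpI reflpI sympI transpI) (auto intro: pcong.intros)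

lemma pcong_append_left: "pcong u v \<Longrightarrow> pcong (p @ u) (p @ v)"
  by (induction rule: pcong.induct)
     (auto intro: pcong.intros simp del: append_assoc simp: append_assoc[symmetric]
           dest: pcong.rel[where p = "p @ _"])

lemma pcong_append_right: "pcong u v \<Longrightarrow> pcong (u @ q) (v @ q)"
  by (induction rule: pcong.induct) (auto intro: pcong.intros dest: pcong.rel[where q = "_ @ q"])

lemma pcong_append: "pcong u v \<Longrightarrow> pcong u' v' \<Longrightarrow> pcong (u @ u') (v @ v')"
  by (meson pcong.trans pcong_append_left pcong_append_right)

quotient_type pm = "gen list" / pcong
  by (rule pcong_equivp)

instantiation pm :: monoid_mult
begin
lift_definition one_pm :: pm is "[]" .
lift_definition times_pm :: "pm \<Rightarrow> pm \<Rightarrow> pm" is "(@)"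
  by (rule pcong_append)
instance
  by standard (transfer; simp add: pcong.refl)+
end

lift_definition letter :: "gen \<Rightarrow> pm" is "\<lambda>g. [g]" .

end

theory Submission
  imports Defs "HOL-Library.Multiset"
begin

text \<open>
  The relations let the block \<open>xy\<close> next to \<open>a\<close> be turned into \<open>yx\<close> one block at
  a time, each conversion costing one cyclic shift. For the distance bound, a word with one \<open>a\<close>
  is read cyclically starting after its \<open>a\<close>; after deleting \<open>b\<close>, count the \<open>yx\<close> blocks at even
  positions and subtract one if \<open>b\<close> precedes \<open>a\<close> in the linear word. This integer is invariant
  under the defining relations (the relation \<open>axyb = byxa\<close> creates one \<open>yx\<close> block and moves
  \<open>b\<close> in front of \<open>a\<close>), and a cyclic shift changes it by at most one, since the cyclic reading
  is unaffected and only the position of \<open>b\<close> relative to \<open>a\<close> can change. It is \<open>0\<close> on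
  \<open>a(xy)\<^sup>\<alpha>b\<close> and \<open>\<alpha> - 1\<close> on \<open>b(yx)\<^sup>\<alpha>a\<close>.
\<close>

lemma cyc_shift_relpowp_Lipschitz:
  fixes F :: "'a::monoid_mult \<Rightarrow> int"
  assumes "\<And>x y. \<bar>F (x * y) - F (y * x)\<bar> \<le> 1"
  shows "(cyc_shift ^^ n) s t \<Longrightarrow> \<bar>F s - F t\<bar> \<le> int n"
proof (induction n arbitrary: t)
  case (Suc n)
  then obtain u where "(cyc_shift ^^ n) s u" "cyc_shift u t" by auto
  moreover have "\<bar>F u - F t\<bar> \<le> 1" if "cyc_shift u t"
    using that assms unfolding cyc_shift_def by blast
  ultimately show ?case using Suc.IH by fastforce
qed simp

lemma K_dist_ge_Lipschitz:
  fixes F :: "'a::monoid_mult \<Rightarrow> int"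
  assumes "\<And>x y. \<bar>F (x * y) - F (y * x)\<bar> \<le> 1"
  shows "enat (nat \<bar>F s - F t\<bar>) \<le> K_dist s t"
  unfolding K_dist_def
proof (rule INF_greatest)
  fix n assume "n \<in> {n. (cyc_shift ^^ n) s t}"
  then have "\<bar>F s - F t\<bar> \<le> int n" using cyc_shift_relpowp_Lipschitz[where F = F, OF assms] by blast
  then show "enat (nat \<bar>F s - F t\<bar>) \<le> enat n" by simp
qed

lemma K_dist_le_K_comp_diam: "K_conn s t \<Longrightarrow> K_dist s t \<le> K_comp_diam s"
  unfolding K_comp_diam_def K_conn_def
  by (rule SUP_upper2[of "(s, t)"]) auto

lemma K_comp_diam_unbounded:
  fixes s :: "nat \<Rightarrow> 'a::monoid_mult" and t :: "nat \<Rightarrow> 'a"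
  assumes "\<And>n. K_conn (s n) (t n)" and "\<And>n. enat n \<le> K_dist (s n) (t n)"
  shows "\<not> (\<exists>N. \<forall>u::'a. K_comp_diam u \<le> enat N)"
proof
  assume "\<exists>N. \<forall>u::'a. K_comp_diam u \<le> enat N"
  then obtain N where "K_comp_diam (s (Suc N)) \<le> enat N" by blast
  moreover have "enat (Suc N) \<le> K_comp_diam (s (Suc N))"
    using assms K_dist_le_K_comp_diam order_trans by blast
  ultimately have "enat (Suc N) \<le> enat N" by (metis order_trans)
  then show False by simp
qed

lemma cyc_shift_trade_block:
  fixes a b p q :: "'a::monoid_mult"
  assumes bp: "b * p = p * b" and bq: "b * q = q * b" and apb: "a * p * b = b * q * a"
  shows "cyc_shift (q ^ k * a * p ^ Suc m * b) (q ^ Suc k * a * p ^ m * b)"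
proof -
  have "q ^ k * a * p ^ Suc m * b = q ^ k * (a * p * b) * p ^ m"
    by (simp add: mult.assoc power_commuting_commutes[OF bp[symmetric]])
  also have "\<dots> = (q ^ k * b) * (q * a * p ^ m)"
    by (metis apb mult.assoc)
  also have "\<dots> = b * (q ^ Suc k * a * p ^ m)"
    by (metis power_commuting_commutes[OF bq[symmetric]] mult.assoc power_Suc2)
  finally show ?thesis unfolding cyc_shift_def by (metis mult.assoc)
qed

lemma K_conn_trade_blocks:
  fixes a b p q :: "'a::monoid_mult"
  assumes "b * p = p * b" and "b * q = q * b" and "a * p * b = b * q * a"
  shows "K_conn (a * p ^ n * b) (b * q ^ n * a)"
proof -
  have "K_conn (q ^ k * a * p ^ m * b) (q ^ (k + m) * a * b)" for k m
  proof (induction m arbitrary: k)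
    case (Suc m)
    then show ?case
      using cyc_shift_trade_block[OF assms] unfolding K_conn_def
      by (metis add_Suc_shift converse_rtranclp_into_rtranclp)
  qed (simp add: K_conn_def)
  from this[of 0 n] have "K_conn (a * p ^ n * b) (q ^ n * a * b)" by simp
  moreover have "cyc_shift (q ^ n * a * b) (b * q ^ n * a)"
    unfolding cyc_shift_def by (metis mult.assoc)
  ultimately show ?thesis unfolding K_conn_def by simp
qed

fun yx_blocks :: "gen list \<Rightarrow> nat" where
  "yx_blocks (u # v # w) = of_bool (u = Y \<and> v = X) + yx_blocks w"
| "yx_blocks _ = 0"

lemma yx_blocks_append: "even (length u) \<Longrightarrow> yx_blocks (u @ w) = yx_blocks u + yx_blocks w"
  by (induction u rule: yx_blocks.induct) auto

definition after_A :: "gen list \<Rightarrow> gen list" where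
  "after_A w = tl (dropWhile (\<lambda>g. g \<noteq> A) w) @ takeWhile (\<lambda>g. g \<noteq> A) w"

definition B_before_A :: "gen list \<Rightarrow> bool" where
  "B_before_A w \<longleftrightarrow> B \<in> set (takeWhile (\<lambda>g. g \<noteq> A) w)"

definition admissible :: "gen list \<Rightarrow> bool" where
  "admissible w \<longleftrightarrow> count_list w A = 1 \<and> count_list w B = 1 \<and> even (length w)"

definition weight :: "gen list \<Rightarrow> int" where
  "weight w = (if admissible w
     then int (yx_blocks (filter (\<lambda>g. g \<noteq> B) (after_A w))) - of_bool (B_before_A w) else 0)"

lemma takeWhile_dropWhile_split:
  assumes "A \<notin> set s"
  shows "takeWhile (\<lambda>g. g \<noteq> A) (s @ A # t) = s" "dropWhile (\<lambda>g. g \<noteq> A) (s @ A # t) = A # t"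
  using assms by (auto simp: takeWhile_append dropWhile_append)

lemma after_A_split: "A \<notin> set s \<Longrightarrow> after_A (s @ A # t) = t @ s"
  by (simp add: after_A_def takeWhile_dropWhile_split)

lemma B_before_A_split: "A \<notin> set s \<Longrightarrow> B_before_A (s @ A # t) \<longleftrightarrow> B \<in> set s"
  by (simp add: B_before_A_def takeWhile_dropWhile_split)

lemma after_A_rotate:
  assumes "count_list (p @ q) A = 1"
  shows "after_A (p @ q) = after_A (q @ p)"
proof (cases "A \<in> set p")
  case True
  then obtain s t where p: "p = s @ A # t" "A \<notin> set s" by (meson split_list_first)
  with assms have "A \<notin> set (q @ s)" by (auto simp: count_list_0_iff[symmetric])
  then show ?thesis using p after_A_split[of s "t @ q"] after_A_split[of "q @ s" t] by simp
next
  case False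
  from assms have "A \<in> set (p @ q)" by (metis count_list_0_iff zero_neq_one)
  with False have "A \<in> set q" by simp
  then obtain s t where q: "q = s @ A # t" "A \<notin> set s" by (meson split_list_first)
  then show ?thesis using False after_A_split[of "p @ s" t] after_A_split[of s "t @ p"] by simp
qed

lemma admissible_rotate: "admissible (p @ q) \<longleftrightarrow> admissible (q @ p)"
  by (auto simp: admissible_def)

lemma weight_rotate: "\<bar>weight (p @ q) - weight (q @ p)\<bar> \<le> 1"
proof (cases "admissible (p @ q)")
  case True
  then have "after_A (p @ q) = after_A (q @ p)"
    by (simp add: admissible_def after_A_rotate)
  then show ?thesis using True admissible_rotate[of p q] by (simp add: weight_def)
next
  case False
  then show ?thesis using admissible_rotate[of p q] by (simp add: weight_def)
qed

lemma admissible_replace: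
  assumes "mset u = mset v"
  shows "admissible (p @ u @ q) \<longleftrightarrow> admissible (p @ v @ q)"
proof -
  have "count_list u g = count_list v g" for g by (metis assms count_mset)
  moreover have "length u = length v" by (metis assms size_mset)
  ultimately show ?thesis by (simp add: admissible_def)
qed

lemma after_A_replace:
  assumes "A \<notin> set u" "A \<notin> set v" "A \<in> set (p @ q)"
  obtains r r' where "after_A (p @ u @ q) = r @ u @ r'" "after_A (p @ v @ q) = r @ v @ r'"
proof (cases "A \<in> set p")
  case True
  then obtain s t where p: "p = s @ A # t" "A \<notin> set s" by (meson split_list_first)
  have "after_A (p @ w @ q) = t @ w @ (q @ s)" for w
    using after_A_split[of s "t @ w @ q"] p by simp
  then show ?thesis using that by blast
next
  case False
  with assms(3) have "A \<in> set q" by simp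
  then obtain s t where q: "q = s @ A # t" "A \<notin> set s" by (meson split_list_first)
  have "after_A (p @ w @ q) = (t @ p) @ w @ s" if "A \<notin> set w" for w
    using after_A_split[of "p @ w @ s" t] q False that by simp
  then show ?thesis using that assms(1,2) by blast
qed

lemma B_before_A_replace:
  assumes "A \<notin> set u" "A \<notin> set v" "B \<in> set u \<longleftrightarrow> B \<in> set v"
  shows "B_before_A (p @ u @ q) \<longleftrightarrow> B_before_A (p @ v @ q)"
proof (cases "A \<in> set p")
  case True
  then obtain s t where p: "p = s @ A # t" "A \<notin> set s" by (meson split_list_first)
  have "B_before_A (p @ w @ q) \<longleftrightarrow> B \<in> set s" for w
    using B_before_A_split[of s "t @ w @ q"] p by simp
  then show ?thesis by blast
next
  case False
  have "takeWhile (\<lambda>g. g \<noteq> A) (p @ w @ q) = p @ w @ takeWhile (\<lambda>g. g \<noteq> A) q" if "A \<notin> set w" for w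
    using False that by (simp add: takeWhile_append)
  then show ?thesis using assms by (simp add: B_before_A_def)
qed

lemma weight_move_B:
  assumes "mset u = mset v" "A \<notin> set u" "filter (\<lambda>g. g \<noteq> B) u = filter (\<lambda>g. g \<noteq> B) v"
  shows "weight (p @ u @ q) = weight (p @ v @ q)"
proof (cases "admissible (p @ u @ q)")
  case True
  have "A \<notin> set v" and uvB: "B \<in> set u \<longleftrightarrow> B \<in> set v"
    using assms(1,2) by (metis set_mset_mset)+
  have "count_list (p @ q) A \<noteq> 0"
    using True assms(2) by (simp add: admissible_def)
  then have "A \<in> set (p @ q)" by (simp add: count_list_0_iff)
  then obtain r r' where "after_A (p @ u @ q) = r @ u @ r'" "after_A (p @ v @ q) = r @ v @ r'"
    using assms(2) \<open>A \<notin> set v\<close> after_A_replace by blast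
  then have "filter (\<lambda>g. g \<noteq> B) (after_A (p @ u @ q)) = filter (\<lambda>g. g \<noteq> B) (after_A (p @ v @ q))"
    using assms(3) by simp
  moreover have "B_before_A (p @ u @ q) \<longleftrightarrow> B_before_A (p @ v @ q)"
    using B_before_A_replace assms(2) \<open>A \<notin> set v\<close> uvB by blast
  moreover have "admissible (p @ v @ q)"
    using True admissible_replace[OF assms(1)] by blast
  ultimately show ?thesis using True by (simp add: weight_def)
next
  case False
  then show ?thesis using admissible_replace[OF assms(1)] by (simp add: weight_def)
qed

lemma weight_swap_AB: "weight (p @ [A,X,Y,B] @ q) = weight (p @ [B,Y,X,A] @ q)"
proof (cases "admissible (p @ [A,X,Y,B] @ q)")
  case True
  then have nA: "A \<notin> set p" "A \<notin> set q" and nB: "B \<notin> set p" "B \<notin> set q"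
    and ev: "even (length (q @ p))"
    by (auto simp: admissible_def count_list_0_iff[symmetric])
  have adm: "admissible (p @ [B,Y,X,A] @ q)"
    using True admissible_replace[of "[A,X,Y,B]" "[B,Y,X,A]"] by simp
  have qp: "filter (\<lambda>g. g \<noteq> B) q = q" "filter (\<lambda>g. g \<noteq> B) p = p"
    unfolding filter_id_conv using nB by auto
  have "weight (p @ [A,X,Y,B] @ q) = int (yx_blocks ([X,Y] @ q @ p))"
    using True nA nB qp after_A_split[of p "[X,Y,B] @ q"] B_before_A_split[of p "[X,Y,B] @ q"]
    by (simp add: weight_def)
  also have "\<dots> = int (yx_blocks ((q @ p) @ [Y,X])) - 1"
    using yx_blocks_append[OF ev, of "[Y,X]"] by simp
  also have "\<dots> = weight (p @ [B,Y,X,A] @ q)"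
    using adm nA nB qp after_A_split[of "p @ [B,Y,X]" q] B_before_A_split[of "p @ [B,Y,X]" q]
    by (simp add: weight_def)
  finally show ?thesis .
next
  case False
  then show ?thesis using admissible_replace[of "[A,X,Y,B]" "[B,Y,X,A]"] by (simp add: weight_def)
qed

lemma weight_pcong: "pcong u v \<Longrightarrow> weight u = weight v"
proof (induction rule: pcong.induct)
  case (rel u v p q)
  then consider "u = [B,X,Y]" "v = [X,Y,B]" | "u = [B,Y,X]" "v = [Y,X,B]"
    | "u = [A,X,Y,B]" "v = [B,Y,X,A]"
    by (auto simp: rels_def)
  then show ?case
  proof cases
    case 1
    then show ?thesis using weight_move_B[of "[B,X,Y]" "[X,Y,B]" p q] by simp
  next
    case 2
    then show ?thesis using weight_move_B[of "[B,Y,X]" "[Y,X,B]" p q] by simp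
  next
    case 3
    then show ?thesis using weight_swap_AB[of p q] by simp
  qed
qed simp_all

lift_definition pm_weight :: "pm \<Rightarrow> int" is weight
  by (rule weight_pcong)

lemma pm_weight_shift: "\<bar>pm_weight (s * t) - pm_weight (t * s)\<bar> \<le> 1"
  by transfer (rule weight_rotate)

lemma letter_abs: "letter g = abs_pm [g]"
  by (simp add: letter_def)

lemma times_abs: "abs_pm u * abs_pm v = abs_pm (u @ v)"
  by (simp add: times_pm.abs_eq)

lemma power_abs: "abs_pm w ^ n = abs_pm (concat (replicate n w))"
  by (induction n) (simp_all add: one_pm_def times_abs)

lemma abs_pm_rel: "(u, v) \<in> rels \<Longrightarrow> abs_pm u = abs_pm v"
  using pcong.rel[of u v "[]" "[]"] by (simp add: pm.abs_eq_iff)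

lemma letter_relations:
  "letter B * (letter X * letter Y) = letter X * letter Y * letter B"
  "letter B * (letter Y * letter X) = letter Y * letter X * letter B"
  "letter A * (letter X * letter Y) * letter B = letter B * (letter Y * letter X) * letter A"
  by (simp_all add: letter_abs times_abs) (rule abs_pm_rel, simp add: rels_def)+

lemma concat_replicate_pair:
  "set (concat (replicate n [g, h])) \<subseteq> {g, h}"
  "length (concat (replicate n [g, h])) = 2 * n"
  "yx_blocks (concat (replicate n [g, h])) = (if g = Y \<and> h = X then n else 0)"
  by (induction n) auto

lemma pm_weight_start: "pm_weight (letter A * (letter X * letter Y) ^ n * letter B) = 0"
proof -
  let ?w = "concat (replicate n [X, Y])"
  have "letter A * (letter X * letter Y) ^ n * letter B = abs_pm ([] @ A # ?w @ [B])"
    by (simp add: letter_abs times_abs power_abs)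
  moreover have "A \<notin> set ?w" "B \<notin> set ?w" "admissible ([] @ A # ?w @ [B])"
    using concat_replicate_pair(1,2)[of n X Y] by (auto simp: admissible_def)
  ultimately show ?thesis
    using after_A_split[of "[]" "?w @ [B]"] B_before_A_split[of "[]" "?w @ [B]"]
      concat_replicate_pair(3)[of n X Y]
    by (simp add: pm_weight.abs_eq weight_def filter_id_conv)
qed

lemma pm_weight_end: "pm_weight (letter B * (letter Y * letter X) ^ n * letter A) = int n - 1"
proof -
  let ?w = "concat (replicate n [Y, X])"
  have "letter B * (letter Y * letter X) ^ n * letter A = abs_pm ((B # ?w) @ A # [])"
    by (simp add: letter_abs times_abs power_abs)
  moreover have "A \<notin> set ?w" "B \<notin> set ?w" "admissible ((B # ?w) @ A # [])"
    using concat_replicate_pair(1,2)[of n Y X] by (auto simp: admissible_def)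
  ultimately show ?thesis
    using after_A_split[of "B # ?w" "[]"] B_before_A_split[of "B # ?w" "[]"]
      concat_replicate_pair(3)[of n Y X]
    by (simp add: pm_weight.abs_eq weight_def filter_id_conv)
qed

theorem mainTheorem15:
  shows "(\<forall>\<alpha>::nat.
            K_conn (letter A * (letter X * letter Y) ^ \<alpha> * letter B)
                   (letter B * (letter Y * letter X) ^ \<alpha> * letter A)
          \<and> K_dist (letter A * (letter X * letter Y) ^ \<alpha> * letter B)
                   (letter B * (letter Y * letter X) ^ \<alpha> * letter A) \<ge> enat (\<alpha> - 1))
       \<and> multihomogeneous_pres rels
       \<and> \<not> (\<exists>N::nat. \<forall>s::pm. K_comp_diam s \<le> enat N)"
proof -
  let ?s = "\<lambda>n. letter A * (letter X * letter Y) ^ n * letter B"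
  let ?t = "\<lambda>n. letter B * (letter Y * letter X) ^ n * letter A"
  have conn: "K_conn (?s n) (?t n)" for n
    using K_conn_trade_blocks letter_relations by blast
  have dist: "enat (n - 1) \<le> K_dist (?s n) (?t n)" for n
  proof -
    have "enat (n - 1) \<le> enat (nat \<bar>pm_weight (?s n) - pm_weight (?t n)\<bar>)"
      by (simp add: pm_weight_start pm_weight_end)
    also have "\<dots> \<le> K_dist (?s n) (?t n)"
      using K_dist_ge_Lipschitz pm_weight_shift by blast
    finally show ?thesis .
  qed
  have "\<not> (\<exists>N. \<forall>s::pm. K_comp_diam s \<le> enat N)"
  proof (rule K_comp_diam_unbounded[of "\<lambda>n. ?s (Suc n)" "\<lambda>n. ?t (Suc n)"])
    show "enat n \<le> K_dist (?s (Suc n)) (?t (Suc n))" for n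
      using dist[of "Suc n"] by simp
  qed (rule conn)
  moreover have "multihomogeneous_pres rels"
    by (simp add: multihomogeneous_pres_def rels_def)
  ultimately show ?thesis using conn dist by blast
qed

end
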